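(* Let $G=(X,\Sigma,\longrightarrow,X_0)$ and $R=(Z,\Sigma,\longrightarrow,Z_0)$ be automata. For any $\Sigma_{ucr}$-controllability set $E$ from $G$ to $R$, $\mathcal{A}(E)\in\mathit{SPR}(G,R)$; i.e., $\mathcal{A}(E)$ is $\Sigma_{uc}$-admissible w.r.t. $G$ and $\mathcal{A}(E)\|G\sqsubseteq_{cc}R$.
   Context: An automaton is a 4-tuple $A=(Q,\Sigma,\longrightarrow,Q_0)$ with state set $Q$, finite event set $\Sigma$, ${\longrightarrow}\subseteq Q\times\Sigma\times Q$ and $\emptyset\neq Q_0\subseteq Q$. Write $q\xrightarrow{\sigma}q'$ for $(q,\sigma,q')\in{\longrightarrow}$, $q\xrightarrow{\sigma}$ if some such $q'$ exists; extend to strings. A state is reachable if it is reached from an initial state by some string. Events are partitioned into uncontrollable $\Sigma_{uc}$ and controllable $\Sigma_c$; $\Sigma_r\subseteq\Sigma$ is a fixed set of required events. For a supervisor $S=(Y,\Sigma,\longrightarrow,Y_0)$, $S\|G=(Y\times X,\Sigma,\longrightarrow,Y_0\times X_0)$ with $(y,x)\xrightarrow{\sigma}(y',x')$ iff $y\xrightarrow{\sigma}y'$ and $x\xrightarrow{\sigma}x'$. $S$ is $\Sigma_{uc}$-admissible w.r.t. $G$ if for every reachable $(y,x)$ of $S\|G$ and $\sigma\in\Sigma_{uc}$, $x\xrightarrow{\sigma}$ implies $(y,x)\xrightarrow{\sigma}$. For automata $A_1,A_2$ with state sets $Q_1,Q_2$ and initial sets $Q_{01},Q_{02}$, $\Phi\subseteq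 Q_1\times Q_2$ is a cc-simulation if (initial state) every $q_0\in Q_{01}$ has $p_0\in Q_{02}$ with $(q_0,p_0)\in\Phi$; (forward) for $(q,p)\in\Phi$, $\sigma\in\Sigma$, $q\xrightarrow{\sigma}q'$ there is $p'$ with $p\xrightarrow{\sigma}p'$, $(q',p')\in\Phi$; ($\Sigma_r$-backward) for $(q,p)\in\Phi$, $\sigma\in\Sigma_r$, $p\xrightarrow{\sigma}p'$ there is $q'$ with $q\xrightarrow{\sigma}q'$, $(q',p')\in\Phi$. $A_1\sqsubseteq_{cc}A_2$ means one exists. $\mathit{SPR}(G,R)$ is the set of $\Sigma_{uc}$-admissible supervisors $S$ with $S\|G\sqsubseteq_{cc}R$. For $W,W'\subseteq X\times Z$: $\mathit{match}_{G,R}(W,\sigma,W')$ iff for all $(x,z)\in W$ and $x\xrightarrow{\sigma}x'$ there is $z'$ with $z\xrightarrow{\sigma}z'$ and $(x',z')\in W'$. $E\subseteq\wp(X\times Z)$ is a $\Sigma_{ucr}$-controllability set from $G$ to $R$ if: (istate) some $W_0\in E$ satisfies $\forall x_0\in X_0\,\exists z_0\in Z_0\,((x_0,z_0)\in W_0)$; (a) for every $W\in E$, $\sigma\in\Sigma_{uc}$ there is $W'\in E$ with $\mathit{match}_{G,R}(W,\sigma,W')$; (b) for every $W\in E$, $(x,z)\in W$, $\sigma\in\Sigma_r$, $z\xrightarrow{\sigma}z'$, there exist $x'$, $W'\in E$ with $x\xrightarrow{\sigma}x'$, $(x',z')\in W'$, $\mathit{match}_{G,R}(W,\sigma,W')$.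 For such $E$, $E^*=\bigcup_{\widetilde W\in E}\wp(\widetilde W)$, $\mathrm{Succ}_\sigma(W)=\bigcup_{(x,z)\in W}\{x':x\xrightarrow{\sigma}x'\}\times\{z':z\xrightarrow{\sigma}z'\}$, and $\mathcal{A}(E)=(E^*,\Sigma,\longrightarrow,I_E)$ with $I_E=\{W_0\in E^*:\forall x_0\in X_0\,\exists z_0\in Z_0\,((x_0,z_0)\in W_0)\text{ and }W_0\subseteq X_0\times Z_0\}$ and $W\xrightarrow{\sigma}W'$ iff (i) there exist $(x,z)\in W$, $(x',z')\in W'$ with $x\xrightarrow{\sigma}x'$, $z\xrightarrow{\sigma}z'$; (ii) $\mathit{match}_{G,R}(W,\sigma,W')$; (iii) $W'\subseteq\mathrm{Succ}_\sigma(W)$. *)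

theory Defs
  imports Main
begin

record ('q, 'e) automaton =
  states :: "'q set"
  trans  :: "('q \<times> 'e \<times> 'q) set"
  init   :: "'q set"

definition is_automaton :: "'e set \<Rightarrow> ('q, 'e) automaton \<Rightarrow> bool" where
  "is_automaton Evs A \<longleftrightarrow> finite Evs \<and> init A \<noteq> {} \<and> init A \<subseteq> states A \<and>
     trans A \<subseteq> states A \<times> Evs \<times> states A"

inductive reachable :: "('q, 'e) automaton \<Rightarrow> 'q \<Rightarrow> bool" for A where
  reach_init: "q \<in> init A \<Longrightarrow> reachable A q"
| reach_step: "reachable A q \<Longrightarrow> (q, \<sigma>, q') \<in> trans A \<Longrightarrow> reachable A q'"

definition sync :: "('y, 'e) automaton \<Rightarrow> ('x, 'e) automaton \<Rightarrow> ('y \<times> 'x, 'e) automaton" where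
  "sync S G = \<lparr> states = states S \<times> states G,
     trans = {((y, x), \<sigma>, (y', x')). (y, \<sigma>, y') \<in> trans S \<and> (x, \<sigma>, x') \<in> trans G},
     init = init S \<times> init G \<rparr>"

definition admissible :: "'e set \<Rightarrow> ('y, 'e) automaton \<Rightarrow> ('x, 'e) automaton \<Rightarrow> bool" where
  "admissible Evs_uc S G \<longleftrightarrow>
     (\<forall>y x. reachable (sync S G) (y, x) \<longrightarrow>
        (\<forall>\<sigma>\<in>Evs_uc. (\<exists>x'. (x, \<sigma>, x') \<in> trans G) \<longrightarrow>
            (\<exists>p'. ((y, x), \<sigma>, p') \<in> trans (sync S G))))"

definition cc_simulation :: "'e set \<Rightarrow> 'e set \<Rightarrow> ('q1, 'e) automaton \<Rightarrow> ('q2, 'e) automaton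
    \<Rightarrow> ('q1 \<times> 'q2) set \<Rightarrow> bool" where
  "cc_simulation Evs Evs_r A1 A2 \<Phi> \<longleftrightarrow>
     (\<forall>q0\<in>init A1. \<exists>p0\<in>init A2. (q0, p0) \<in> \<Phi>) \<and>
     (\<forall>(q, p)\<in>\<Phi>. \<forall>\<sigma>\<in>Evs. \<forall>q'. (q, \<sigma>, q') \<in> trans A1 \<longrightarrow>
        (\<exists>p'. (p, \<sigma>, p') \<in> trans A2 \<and> (q', p') \<in> \<Phi>)) \<and>
     (\<forall>(q, p)\<in>\<Phi>. \<forall>\<sigma>\<in>Evs_r. \<forall>p'. (p, \<sigma>, p') \<in> trans A2 \<longrightarrow>
        (\<exists>q'. (q, \<sigma>, q') \<in> trans A1 \<and> (q', p') \<in> \<Phi>))"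

definition cc_le :: "'e set \<Rightarrow> 'e set \<Rightarrow> ('q1, 'e) automaton \<Rightarrow> ('q2, 'e) automaton \<Rightarrow> bool" where
  "cc_le Evs Evs_r A1 A2 \<longleftrightarrow> (\<exists>\<Phi>. cc_simulation Evs Evs_r A1 A2 \<Phi>)"

definition SPR :: "'e set \<Rightarrow> 'e set \<Rightarrow> 'e set \<Rightarrow> ('x, 'e) automaton \<Rightarrow> ('z, 'e) automaton
    \<Rightarrow> ('y, 'e) automaton \<Rightarrow> bool" where
  "SPR Evs Evs_uc Evs_r G R S \<longleftrightarrow>
     is_automaton Evs S \<and> admissible Evs_uc S G \<and> cc_le Evs Evs_r (sync S G) R"

definition match :: "('x, 'e) automaton \<Rightarrow> ('z, 'e) automaton \<Rightarrow> ('x \<times> 'z) set \<Rightarrow> 'e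
    \<Rightarrow> ('x \<times> 'z) set \<Rightarrow> bool" where
  "match G R W \<sigma> W' \<longleftrightarrow>
     (\<forall>(x, z)\<in>W. \<forall>x'. (x, \<sigma>, x') \<in> trans G \<longrightarrow> (\<exists>z'. (z, \<sigma>, z') \<in> trans R \<and> (x', z') \<in> W'))"

definition ctrl_set :: "'e set \<Rightarrow> 'e set \<Rightarrow> ('x, 'e) automaton \<Rightarrow> ('z, 'e) automaton
    \<Rightarrow> ('x \<times> 'z) set set \<Rightarrow> bool" where
  "ctrl_set Evs_uc Evs_r G R E \<longleftrightarrow>
     E \<subseteq> Pow (states G \<times> states R) \<and>
     (\<exists>W0\<in>E. \<forall>x0\<in>init G. \<exists>z0\<in>init R. (x0, z0) \<in> W0) \<and>
     (\<forall>W\<in>E. \<forall>\<sigma>\<in>Evs_uc. \<exists>W'\<in>E. match G R W \<sigma> W') \<and>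
     (\<forall>W\<in>E. \<forall>(x, z)\<in>W. \<forall>\<sigma>\<in>Evs_r. \<forall>z'. (z, \<sigma>, z') \<in> trans R \<longrightarrow>
        (\<exists>x' W'. (x, \<sigma>, x') \<in> trans G \<and> W' \<in> E \<and> (x', z') \<in> W' \<and> match G R W \<sigma> W'))"

definition Succ :: "('x, 'e) automaton \<Rightarrow> ('z, 'e) automaton \<Rightarrow> 'e \<Rightarrow> ('x \<times> 'z) set \<Rightarrow> ('x \<times> 'z) set" where
  "Succ G R \<sigma> W = (\<Union>(x, z)\<in>W. {x'. (x, \<sigma>, x') \<in> trans G} \<times> {z'. (z, \<sigma>, z') \<in> trans R})"

definition AE :: "'e set \<Rightarrow> ('x, 'e) automaton \<Rightarrow> ('z, 'e) automaton \<Rightarrow> ('x \<times> 'z) set set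
    \<Rightarrow> (('x \<times> 'z) set, 'e) automaton" where
  "AE Evs G R E =
    (let Estar = (\<Union>W\<in>E. Pow W) in
     \<lparr> states = Estar,
       trans = {(W, \<sigma>, W'). W \<in> Estar \<and> W' \<in> Estar \<and> \<sigma> \<in> Evs \<and>
                 (\<exists>x z x' z'. (x, z) \<in> W \<and> (x', z') \<in> W' \<and> (x, \<sigma>, x') \<in> trans G \<and> (z, \<sigma>, z') \<in> trans R) \<and>
                 match G R W \<sigma> W' \<and> W' \<subseteq> Succ G R \<sigma> W},
       init = {W0 \<in> Estar. (\<forall>x0\<in>init G. \<exists>z0\<in>init R. (x0, z0) \<in> W0) \<and> W0 \<subseteq> init G \<times> init R} \<rparr>)"

end

theory Submission
  imports Defs
begin

text \<open>A state W of A(E) is a set of pairs (x, z), and the relation pairing the state (W, x) of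
  A(E) || G with every z such that (x, z) \<in> W is a cc-simulation: its forward condition is
  exactly the match condition built into the transitions of A(E). For required events, and for
  admissibility with respect to uncontrollable ones, conditions (b) and (a) of a controllability
  set supply a successor W' \<in> E matching some superset of W in E; the restriction of W' to
  Succ_\<sigma>(W) still matches W and lies in E*, which is closed under subsets, so it is a
  transition of A(E). Admissibility also uses that in every reachable state (W, x) of
  A(E) || G the plant state x occurs as a first component in W.\<close>

lemma ctrl_set_init:
  assumes "ctrl_set Evs_uc Evs_r G R E"
  obtains W0 where "W0 \<in> E" "\<forall>x0\<in>init G. \<exists>z0\<in>init R. (x0, z0) \<in> W0"
proof -
  have "\<exists>W0\<in>E. \<forall>x0\<in>init G. \<exists>z0\<in>init R. (x0, z0) \<in> W0"
    using assms by (simp add: ctrl_set_def)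
  with that show thesis by blast
qed

lemma ctrl_set_uncontrollable:
  assumes "ctrl_set Evs_uc Evs_r G R E" "W \<in> E" "\<sigma> \<in> Evs_uc"
  obtains W' where "W' \<in> E" "match G R W \<sigma> W'"
proof -
  have "\<forall>W\<in>E. \<forall>\<sigma>\<in>Evs_uc. \<exists>W'\<in>E. match G R W \<sigma> W'"
    using assms(1) by (simp add: ctrl_set_def)
  with assms(2,3) that show thesis by blast
qed

lemma ctrl_set_required:
  assumes "ctrl_set Evs_uc Evs_r G R E" "W \<in> E" "(x, z) \<in> W" "\<sigma> \<in> Evs_r"
    and "(z, \<sigma>, z') \<in> trans R"
  obtains x' W' where "(x, \<sigma>, x') \<in> trans G" "W' \<in> E" "(x', z') \<in> W'" "match G R W \<sigma> W'"
proof -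
  have "\<forall>W\<in>E. \<forall>(x, z)\<in>W. \<forall>\<sigma>\<in>Evs_r. \<forall>z'. (z, \<sigma>, z') \<in> trans R \<longrightarrow>
          (\<exists>x' W'. (x, \<sigma>, x') \<in> trans G \<and> W' \<in> E \<and> (x', z') \<in> W' \<and> match G R W \<sigma> W')"
    using assms(1) by (simp add: ctrl_set_def)
  with assms(2-5) that show thesis by fastforce
qed

lemma AE_states: "states (AE Evs G R E) = (\<Union>W\<in>E. Pow W)"
  by (simp add: AE_def Let_def)

lemma AE_init:
  "init (AE Evs G R E) = {W0 \<in> (\<Union>W\<in>E. Pow W).
     (\<forall>x0\<in>init G. \<exists>z0\<in>init R. (x0, z0) \<in> W0) \<and> W0 \<subseteq> init G \<times> init R}"
  by (simp add: AE_def Let_def)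

lemma AE_trans:
  "(W, \<sigma>, W') \<in> trans (AE Evs G R E) \<longleftrightarrow>
     W \<in> (\<Union>W\<in>E. Pow W) \<and> W' \<in> (\<Union>W\<in>E. Pow W) \<and> \<sigma> \<in> Evs \<and>
     (\<exists>x z x' z'. (x, z) \<in> W \<and> (x', z') \<in> W' \<and> (x, \<sigma>, x') \<in> trans G \<and> (z, \<sigma>, z') \<in> trans R) \<and>
     match G R W \<sigma> W' \<and> W' \<subseteq> Succ G R \<sigma> W"
  by (simp add: AE_def Let_def)

lemma sync_trans:
  "((y, x), \<sigma>, (y', x')) \<in> trans (sync S G) \<longleftrightarrow> (y, \<sigma>, y') \<in> trans S \<and> (x, \<sigma>, x') \<in> trans G"
  by (simp add: sync_def)

lemma sync_init: "init (sync S G) = init S \<times> init G"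
  by (simp add: sync_def)

lemma match_antimono_Int_Succ:
  assumes "match G R W \<sigma> W'" and "V \<subseteq> W"
  shows "match G R V \<sigma> (W' \<inter> Succ G R \<sigma> V)"
  using assms unfolding match_def Succ_def by fastforce

lemma AE_trans_Int_Succ:
  assumes "W \<subseteq> W\<^sub>E" "W\<^sub>E \<in> E" "W' \<in> E" "match G R W\<^sub>E \<sigma> W'" "\<sigma> \<in> Evs"
    and "(x, z) \<in> W" "(x, \<sigma>, x') \<in> trans G" "(z, \<sigma>, z') \<in> trans R" "(x', z') \<in> W'"
  shows "(W, \<sigma>, W' \<inter> Succ G R \<sigma> W) \<in> trans (AE Evs G R E)"
proof -
  have "(x', z') \<in> Succ G R \<sigma> W"
    using assms(6-8) unfolding Succ_def by blast
  then show ?thesis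
    using assms match_antimono_Int_Succ[OF assms(4,1)] unfolding AE_trans by blast
qed

lemma reachable_sync_AE:
  assumes "reachable (sync (AE Evs G R E) G) (W, x)"
  shows "W \<in> states (AE Evs G R E) \<and> (\<exists>z. (x, z) \<in> W)"
  using assms
proof (induction "(W, x)" arbitrary: W x)
  case reach_init
  then show ?case by (auto simp: sync_init AE_init AE_states)
next
  case (reach_step q \<sigma>)
  obtain V v where q: "q = (V, v)" by fastforce
  with reach_step obtain z where "(v, z) \<in> V" by blast
  moreover have "(V, \<sigma>, W) \<in> trans (AE Evs G R E)" "(v, \<sigma>, x) \<in> trans G"
    using reach_step q by (simp_all add: sync_trans)
  ultimately show ?case
    unfolding AE_trans AE_states match_def by blast
qed

lemma AE_is_automaton:
  assumes "is_automaton Evs G" and "ctrl_set Evs_uc Evs_r G R E"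
  shows "is_automaton Evs (AE Evs G R E)"
proof -
  obtain W0 where "W0 \<in> E" "\<forall>x0\<in>init G. \<exists>z0\<in>init R. (x0, z0) \<in> W0"
    by (rule ctrl_set_init[OF assms(2)])
  then have "W0 \<inter> (init G \<times> init R) \<in> init (AE Evs G R E)"
    unfolding AE_init by blast
  moreover have "init (AE Evs G R E) \<subseteq> states (AE Evs G R E)"
    unfolding AE_init AE_states by blast
  moreover have "W \<in> states (AE Evs G R E) \<and> \<sigma> \<in> Evs \<and> W' \<in> states (AE Evs G R E)"
    if "(W, \<sigma>, W') \<in> trans (AE Evs G R E)" for W \<sigma> W'
    using that unfolding AE_trans AE_states by blast
  then have "trans (AE Evs G R E) \<subseteq> states (AE Evs G R E) \<times> Evs \<times> states (AE Evs G R E)"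
    by fast
  ultimately show ?thesis
    using assms(1) unfolding is_automaton_def by blast
qed

lemma AE_admissible:
  assumes "Evs_uc \<subseteq> Evs" and "ctrl_set Evs_uc Evs_r G R E"
  shows "admissible Evs_uc (AE Evs G R E) G"
  unfolding admissible_def
proof (intro allI impI ballI)
  fix W x \<sigma>
  assume reach: "reachable (sync (AE Evs G R E) G) (W, x)" and "\<sigma> \<in> Evs_uc"
    and "\<exists>x'. (x, \<sigma>, x') \<in> trans G"
  then obtain x' where x': "(x, \<sigma>, x') \<in> trans G" by blast
  from reachable_sync_AE[OF reach] obtain W\<^sub>E z
    where "W\<^sub>E \<in> E" "W \<subseteq> W\<^sub>E" and xz: "(x, z) \<in> W"
    unfolding AE_states by blast
  obtain W' where "W' \<in> E" and match: "match G R W\<^sub>E \<sigma> W'"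
    by (rule ctrl_set_uncontrollable[OF assms(2) \<open>W\<^sub>E \<in> E\<close> \<open>\<sigma> \<in> Evs_uc\<close>])
  from xz \<open>W \<subseteq> W\<^sub>E\<close> have "(x, z) \<in> W\<^sub>E" by blast
  with match x' obtain z' where "(z, \<sigma>, z') \<in> trans R" "(x', z') \<in> W'"
    unfolding match_def by blast
  with \<open>W \<subseteq> W\<^sub>E\<close> \<open>W\<^sub>E \<in> E\<close> \<open>W' \<in> E\<close> match \<open>\<sigma> \<in> Evs_uc\<close> assms(1) xz x'
  have "(W, \<sigma>, W' \<inter> Succ G R \<sigma> W) \<in> trans (AE Evs G R E)"
    by (intro AE_trans_Int_Succ) auto
  with x' have "((W, x), \<sigma>, (W' \<inter> Succ G R \<sigma> W, x')) \<in> trans (sync (AE Evs G R E) G)"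
    by (simp add: sync_trans)
  then show "\<exists>p'. ((W, x), \<sigma>, p') \<in> trans (sync (AE Evs G R E) G)" ..
qed

lemma cc_simulationI:
  assumes "\<And>q0. q0 \<in> init A1 \<Longrightarrow> \<exists>p0\<in>init A2. (q0, p0) \<in> \<Phi>"
    and "\<And>q p \<sigma> q'. (q, p) \<in> \<Phi> \<Longrightarrow> (q, \<sigma>, q') \<in> trans A1 \<Longrightarrow>
           \<exists>p'. (p, \<sigma>, p') \<in> trans A2 \<and> (q', p') \<in> \<Phi>"
    and "\<And>q p \<sigma> p'. (q, p) \<in> \<Phi> \<Longrightarrow> \<sigma> \<in> Evs_r \<Longrightarrow> (p, \<sigma>, p') \<in> trans A2 \<Longrightarrow>
           \<exists>q'. (q, \<sigma>, q') \<in> trans A1 \<and> (q', p') \<in> \<Phi>"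
  shows "cc_simulation Evs Evs_r A1 A2 \<Phi>"
  using assms unfolding cc_simulation_def by blast

lemma AE_cc_simulation:
  assumes "Evs_r \<subseteq> Evs" and "ctrl_set Evs_uc Evs_r G R E"
  shows "cc_simulation Evs Evs_r (sync (AE Evs G R E) G) R
           {((W, x), z). (x, z) \<in> W \<and> W \<in> states (AE Evs G R E)}"
    (is "cc_simulation _ _ ?SG _ ?\<Phi>")
proof (rule cc_simulationI)
  show "\<exists>z0\<in>init R. (q0, z0) \<in> ?\<Phi>" if q0_init: "q0 \<in> init ?SG" for q0
  proof -
    obtain W x where q0: "q0 = (W, x)" and "W \<in> init (AE Evs G R E)" "x \<in> init G"
      using q0_init by (auto simp: sync_init)
    then have "W \<in> states (AE Evs G R E)" "\<exists>z0\<in>init R. (x, z0) \<in> W"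
      unfolding AE_init AE_states by blast+
    then show ?thesis
      unfolding q0 by blast
  qed
next
  show "\<exists>z'. (z, \<sigma>, z') \<in> trans R \<and> (q', z') \<in> ?\<Phi>"
    if "(q, z) \<in> ?\<Phi>" "(q, \<sigma>, q') \<in> trans ?SG" for q z \<sigma> q'
  proof -
    obtain W x W' x' where q: "q = (W, x)" and q': "q' = (W', x')" by fastforce
    from that have xz: "(x, z) \<in> W" and "(W, \<sigma>, W') \<in> trans (AE Evs G R E)"
      and x': "(x, \<sigma>, x') \<in> trans G"
      by (simp_all add: q q' sync_trans)
    then have "match G R W \<sigma> W'" "W' \<in> states (AE Evs G R E)"
      unfolding AE_trans AE_states by blast+
    with xz x' show ?thesis
      unfolding q' match_def by blast
  qed
next
  show "\<exists>q'. (q, \<sigma>, q') \<in> trans ?SG \<and> (q', z') \<in> ?\<Phi>"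
    if qz: "(q, z) \<in> ?\<Phi>" and \<sigma>: "\<sigma> \<in> Evs_r" and z': "(z, \<sigma>, z') \<in> trans R"
    for q z \<sigma> z'
  proof -
    obtain W x where q: "q = (W, x)" by fastforce
    from qz obtain W\<^sub>E where "W\<^sub>E \<in> E" "W \<subseteq> W\<^sub>E" and xz: "(x, z) \<in> W"
      by (auto simp: q AE_states)
    moreover from xz \<open>W \<subseteq> W\<^sub>E\<close> have "(x, z) \<in> W\<^sub>E" by blast
    ultimately obtain x' W' where
      x': "(x, \<sigma>, x') \<in> trans G" and "W' \<in> E" "(x', z') \<in> W'" "match G R W\<^sub>E \<sigma> W'"
      using ctrl_set_required[OF assms(2) _ _ \<sigma> z'] by blast
    with \<open>W\<^sub>E \<in> E\<close> \<open>W \<subseteq> W\<^sub>E\<close> xz \<sigma> z' assms(1)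
    have step: "(W, \<sigma>, W' \<inter> Succ G R \<sigma> W) \<in> trans (AE Evs G R E)"
      by (intro AE_trans_Int_Succ) auto
    then have "W' \<inter> Succ G R \<sigma> W \<in> states (AE Evs G R E)"
      unfolding AE_trans AE_states by blast
    moreover from step x' have "((W, x), \<sigma>, (W' \<inter> Succ G R \<sigma> W, x')) \<in> trans ?SG"
      by (simp add: sync_trans)
    moreover have "(x', z') \<in> W' \<inter> Succ G R \<sigma> W"
      using \<open>(x', z') \<in> W'\<close> xz x' z' unfolding Succ_def by blast
    ultimately show ?thesis
      unfolding q by blast
  qed
qed

theorem lemma3:
  fixes Evs Evs_uc Evs_r :: "'e set"
    and G :: "('x, 'e) automaton" and R :: "('z, 'e) automaton"
    and E :: "('x \<times> 'z) set set"
  assumes "is_automaton Evs G" and "is_automaton Evs R"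
    and "Evs_uc \<subseteq> Evs" and "Evs_r \<subseteq> Evs"
    and "ctrl_set Evs_uc Evs_r G R E"
  shows "SPR Evs Evs_uc Evs_r G R (AE Evs G R E)"
  unfolding SPR_def cc_le_def
  using AE_is_automaton[OF assms(1,5)] AE_admissible[OF assms(3,5)]
    AE_cc_simulation[OF assms(4,5)] by blast

end
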